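(* Let $G$ be a finite graph with no isolated vertices such that there is no nontrivial circuit injection $f:G_M\rightarrow B$ with $B$ a binary matroid. If $G$ has $2N$ vertices, then $G$ is Hamiltonian; if $G$ has $2N+1$ vertices, then $G$ is almost Hamiltonian.
   Context: Graphs are undirected without loops or multiple edges. $G_M$ is the cycle matroid of $G$ (cells: edges; circuits: edge sets of cycles of $G$). A matroid is a pair $(S,\mathscr{C})$, $S\neq\emptyset$, $\mathscr{C}\subseteq 2^S$, satisfying: (I) $A,B\in\mathscr{C}$, $A\subseteq B$ implies $A=B$; (II) $A,B\in\mathscr{C}$, $a\in A\cap B$, $b\in (A\cup B)\setminus(A\cap B)$ implies there exists $D\in\mathscr{C}$ with $D\subseteq A\cup B$, $a\notin D$, $b\in D$. A matroid is binary if the symmetric difference of any two circuits is a union of pairwise disjoint circuits. A circuit injection $f:G_M\rightarrow B$ is a bijection from $E(G)$ onto the cells of $B$ sending each circuit of $G$ to a circuit of $B$; it is nontrivial if $B$ has a circuit not equal to the image of any circuit of $G$. $G$ is Hamiltonian if some circuit contains all its vertices. A graph with $n$ vertices is almost Hamiltonian if every set of $n-1$ of its vertices is contained in the vertex set of some circuit. *)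

theory Defs
  imports Main
begin

definition graph :: "'v set \<Rightarrow> 'v set set \<Rightarrow> bool" where
  "graph V E \<longleftrightarrow> finite V \<and> (\<forall>e\<in>E. \<exists>u v. e = {u, v} \<and> u \<in> V \<and> v \<in> V \<and> u \<noteq> v)"

definition no_isolated_vertices :: "'v set \<Rightarrow> 'v set set \<Rightarrow> bool" where
  "no_isolated_vertices V E \<longleftrightarrow> (\<forall>v\<in>V. \<exists>e\<in>E. v \<in> e)"

definition cycle_edges :: "'v list \<Rightarrow> 'v set set" where
  "cycle_edges vs = {{vs ! i, vs ! ((i + 1) mod length vs)} | i. i < length vs}"

definition is_cycle :: "'v set \<Rightarrow> 'v set set \<Rightarrow> 'v list \<Rightarrow> bool" where
  "is_cycle V E vs \<longleftrightarrow> length vs \<ge> 3 \<and> distinct vs \<and> set vs \<subseteq> V \<and> cycle_edges vs \<subseteq> E"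

definition graph_circuits :: "'v set \<Rightarrow> 'v set set \<Rightarrow> 'v set set set" where
  "graph_circuits V E = {cycle_edges vs | vs. is_cycle V E vs}"

definition cycle_matroid :: "'v set \<Rightarrow> 'v set set \<Rightarrow> 'v set set \<times> 'v set set set" where
  "cycle_matroid V E = (E, graph_circuits V E)"

definition circuit_vertices :: "'v set set \<Rightarrow> 'v set" where
  "circuit_vertices C = \<Union>C"

definition matroid :: "'b set \<Rightarrow> 'b set set \<Rightarrow> bool" where
  "matroid S \<C> \<longleftrightarrow> S \<noteq> {} \<and> \<C> \<subseteq> Pow S
     \<and> (\<forall>A\<in>\<C>. \<forall>B\<in>\<C>. A \<subseteq> B \<longrightarrow> A = B)
     \<and> (\<forall>A\<in>\<C>. \<forall>B\<in>\<C>. \<forall>a\<in>A \<inter> B. \<forall>b\<in>(A \<union> B) - (A \<inter> B).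
          \<exists>D\<in>\<C>. D \<subseteq> A \<union> B \<and> a \<notin> D \<and> b \<in> D)"

definition binary_matroid :: "'b set \<Rightarrow> 'b set set \<Rightarrow> bool" where
  "binary_matroid S \<C> \<longleftrightarrow> matroid S \<C> \<and>
     (\<forall>A\<in>\<C>. \<forall>B\<in>\<C>. \<exists>F. F \<subseteq> \<C> \<and> pairwise disjnt F \<and> \<Union>F = (A - B) \<union> (B - A))"

definition circuit_injection ::
  "('a \<Rightarrow> 'b) \<Rightarrow> 'a set \<times> 'a set set \<Rightarrow> 'b set \<times> 'b set set \<Rightarrow> bool" where
  "circuit_injection f M B \<longleftrightarrow> bij_betw f (fst M) (fst B) \<and> (\<forall>C\<in>snd M. f ` C \<in> snd B)"

definition nontrivial_circuit_injection ::
  "('a \<Rightarrow> 'b) \<Rightarrow> 'a set \<times> 'a set set \<Rightarrow> 'b set \<times> 'b set set \<Rightarrow> bool" where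
  "nontrivial_circuit_injection f M B \<longleftrightarrow> circuit_injection f M B \<and>
     (\<exists>D\<in>snd B. D \<notin> (\<lambda>C. f ` C) ` snd M)"

definition hamiltonian :: "'v set \<Rightarrow> 'v set set \<Rightarrow> bool" where
  "hamiltonian V E \<longleftrightarrow> (\<exists>C\<in>graph_circuits V E. V \<subseteq> circuit_vertices C)"

definition almost_hamiltonian :: "'v set \<Rightarrow> 'v set set \<Rightarrow> bool" where
  "almost_hamiltonian V E \<longleftrightarrow>
     (\<forall>W. W \<subseteq> V \<and> card W = card V - 1 \<longrightarrow>
        (\<exists>C\<in>graph_circuits V E. W \<subseteq> circuit_vertices C))"

end

theory Submission imports Defs begin

text \<open>
  For a vertex set T of even size, let Z be the set of edge sets J whose set of odd-degree
  vertices is empty or T; Z is closed under symmetric difference, so its minimal nonempty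
  members are the circuits of a binary matroid on E. Every cycle of G is such a circuit as
  long as no cycle passes through all of T, because a proper nonempty subset of a cycle has
  odd-degree vertices, all of them on the cycle. A smallest T-join is also a circuit, and it
  is not a cycle; hence the identity is a nontrivial circuit injection. Such a T-join exists
  whenever G is connected; otherwise the two odd-degree vertex sets of one edge in each of two
  components play the role of T. Taking T = V for 2N vertices, and T = any 2N vertices out
  of 2N + 1, gives the theorem.
\<close>

definition cycle_edge :: "'v list \<Rightarrow> nat \<Rightarrow> 'v set" where
  "cycle_edge vs i = {vs ! i, vs ! (Suc i mod length vs)}"

lemma cycle_edges_eq_image: "cycle_edges vs = cycle_edge vs ` {..<length vs}"
  unfolding cycle_edges_def cycle_edge_def by auto

lemma Suc_mod_eq_if: "k < n \<Longrightarrow> Suc k mod n = (if Suc k = n then 0 else Suc k)"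
  by (simp add: mod_Suc)

lemma mod_less_of_less: "k < n \<Longrightarrow> m mod n < (n :: nat)"
  by simp

lemma Suc_mod_inj: "k < n \<Longrightarrow> p < n \<Longrightarrow> Suc k mod n = Suc p mod n \<Longrightarrow> k = p"
  by (auto simp: Suc_mod_eq_if split: if_splits)

lemma cycle_edge_subset: "i < length vs \<Longrightarrow> cycle_edge vs i \<subseteq> set vs"
  unfolding cycle_edge_def using mod_less_of_less[of i "length vs" "Suc i"] by auto

lemma nth_in_cycle_edge_iff:
  assumes "distinct vs" "j < length vs" "k < length vs"
  shows "vs ! j \<in> cycle_edge vs k \<longleftrightarrow> k = j \<or> Suc k mod length vs = j"
proof -
  have "Suc k mod length vs < length vs" using assms(3) by (rule mod_less_of_less)
  then show ?thesis using assms unfolding cycle_edge_def by (auto simp: nth_eq_iff_index_eq)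
qed

lemma cycle_edge_inj:
  assumes "distinct vs" "length vs \<ge> 3" "i < length vs" "k < length vs"
    and "cycle_edge vs i = cycle_edge vs k"
  shows "i = k"
proof (rule ccontr)
  assume "i \<noteq> k"
  moreover have "vs ! i \<in> cycle_edge vs k" "vs ! k \<in> cycle_edge vs i"
    using assms(5) unfolding cycle_edge_def by auto
  ultimately have "Suc k mod length vs = i" "Suc i mod length vs = k"
    using nth_in_cycle_edge_iff assms(1,3,4) by metis+
  then show False
    using assms(2,3,4) \<open>i \<noteq> k\<close> by (auto simp: Suc_mod_eq_if split: if_splits)
qed

lemma cycle_predecessor:
  assumes "j < n" "3 \<le> n"
  obtains p where "p < n" "Suc p mod n = j" "p \<noteq> j"
proof (cases "j = 0")
  case True
  then show ?thesis using assms that[of "n - 1"] by auto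
next
  case False
  then show ?thesis using assms that[of "j - 1"] by auto
qed

lemma cycle_edges_at_nth:
  assumes "distinct vs" "j < length vs" "p < length vs" "Suc p mod length vs = j"
  shows "{e \<in> cycle_edges vs. vs ! j \<in> e} = {cycle_edge vs j, cycle_edge vs p}"
proof -
  have pred: "k = p" if "Suc k mod length vs = j" "k < length vs" for k
    using Suc_mod_inj that assms(3,4) by metis
  show ?thesis
  proof (intro equalityI subsetI)
    fix e assume "e \<in> {e \<in> cycle_edges vs. vs ! j \<in> e}"
    then obtain k where k: "k < length vs" "e = cycle_edge vs k" "vs ! j \<in> cycle_edge vs k"
      unfolding cycle_edges_eq_image by auto
    then show "e \<in> {cycle_edge vs j, cycle_edge vs p}"
      using nth_in_cycle_edge_iff[OF assms(1,2) k(1)] pred by auto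
  next
    fix e assume "e \<in> {cycle_edge vs j, cycle_edge vs p}"
    moreover have "vs ! j \<in> cycle_edge vs j" "vs ! j \<in> cycle_edge vs p"
      using assms(4) unfolding cycle_edge_def by auto
    ultimately show "e \<in> {e \<in> cycle_edges vs. vs ! j \<in> e}"
      using assms(2,3) unfolding cycle_edges_eq_image by auto
  qed
qed

subsection \<open>Odd-degree vertices\<close>

definition degree :: "'v set set \<Rightarrow> 'v \<Rightarrow> nat" where
  "degree J v = card {e \<in> J. v \<in> e}"

definition odd_vertices :: "'v set \<Rightarrow> 'v set set \<Rightarrow> 'v set" where
  "odd_vertices V J = {v \<in> V. odd (degree J v)}"

abbreviation symdiff :: "'a set \<Rightarrow> 'a set \<Rightarrow> 'a set" (infixl "\<triangle>" 65) where
  "A \<triangle> B \<equiv> (A - B) \<union> (B - A)"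

lemma card_symdiff:
  assumes "finite X" "finite Y"
  shows "card (X \<triangle> Y) + 2 * card (X \<inter> Y) = card X + card Y"
proof -
  have "card (X \<triangle> Y) = card (X - Y) + card (Y - X)"
    by (rule card_Un_disjoint) (use assms in auto)
  moreover have "card X = card (X - Y) + card (X \<inter> Y)" "card Y = card (Y - X) + card (X \<inter> Y)"
    using assms by (metis Int_commute card_Diff_subset_Int card_mono inf_le1 le_add_diff_inverse2
        finite_Int)+
  ultimately show ?thesis by simp
qed

lemma odd_vertices_symdiff:
  assumes "finite A" "finite B"
  shows "odd_vertices V (A \<triangle> B) = odd_vertices V A \<triangle> odd_vertices V B"
proof -
  have "degree (A \<triangle> B) v + 2 * degree (A \<inter> B) v = degree A v + degree B v" for v
  proof -
    have "{e \<in> A \<triangle> B. v \<in> e} = {e \<in> A. v \<in> e} \<triangle> {e \<in> B. v \<in> e}"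
      "{e \<in> A \<inter> B. v \<in> e} = {e \<in> A. v \<in> e} \<inter> {e \<in> B. v \<in> e}" by auto
    then show ?thesis unfolding degree_def by (simp add: card_symdiff assms)
  qed
  then have "odd (degree (A \<triangle> B) v) \<longleftrightarrow> odd (degree A v) \<noteq> odd (degree B v)" for v
    by (metis even_add even_mult_iff even_numeral)
  then show ?thesis unfolding odd_vertices_def by auto
qed

lemma odd_vertices_edge:
  assumes "graph V E" "{x, y} \<in> E"
  shows "odd_vertices V {{x, y}} = {x, y}"
proof -
  have "x \<in> V" "y \<in> V" using assms unfolding graph_def by (metis doubleton_eq_iff)+
  moreover have "degree {{x, y}} v = (if v \<in> {x, y} then 1 else 0)" for v
  proof -
    have "{e \<in> {{x, y}}. v \<in> e} = (if v \<in> {x, y} then {{x, y}} else {})" by auto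
    then show ?thesis unfolding degree_def by simp
  qed
  ultimately show ?thesis unfolding odd_vertices_def by auto
qed

lemma degree_off_cycle:
  assumes "v \<notin> set vs" "D \<subseteq> cycle_edges vs"
  shows "degree D v = 0"
proof -
  have "{e \<in> D. v \<in> e} = {}"
    using assms cycle_edge_subset unfolding cycle_edges_eq_image by blast
  then show ?thesis unfolding degree_def by (simp only: card.empty)
qed

lemma degree_cycle_edges_nth:
  assumes "distinct vs" "length vs \<ge> 3" "j < length vs"
  shows "degree (cycle_edges vs) (vs ! j) = 2"
proof -
  obtain p where p: "p < length vs" "Suc p mod length vs = j" "p \<noteq> j"
    using cycle_predecessor assms(2,3) by metis
  then have "cycle_edge vs j \<noteq> cycle_edge vs p" using cycle_edge_inj assms by metis
  then show ?thesis unfolding degree_def using cycle_edges_at_nth[OF assms(1,3) p(1,2)] by simp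
qed

lemma odd_vertices_cycle_edges:
  assumes "distinct vs" "length vs \<ge> 3"
  shows "odd_vertices V (cycle_edges vs) = {}"
proof -
  have "even (degree (cycle_edges vs) v)" for v
    using degree_cycle_edges_nth[OF assms] degree_off_cycle[of v vs]
    by (metis dvd_0_right even_numeral in_set_conv_nth order_refl)
  then show ?thesis unfolding odd_vertices_def by auto
qed

lemma odd_vertices_graph_circuit:
  assumes "C \<in> graph_circuits V E"
  shows "odd_vertices V C = {}"
proof -
  obtain vs where "C = cycle_edges vs" "is_cycle V E vs"
    using assms unfolding graph_circuits_def by blast
  then show ?thesis using odd_vertices_cycle_edges unfolding is_cycle_def by metis
qed

lemma odd_vertices_subset_cycle:
  "D \<subseteq> cycle_edges vs \<Longrightarrow> odd_vertices V D \<subseteq> set vs"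
  using degree_off_cycle unfolding odd_vertices_def by fastforce

lemma cycle_edge_closed_set:
  assumes "\<forall>i<length vs. cycle_edge vs i \<in> D \<longrightarrow> cycle_edge vs (Suc i mod length vs) \<in> D"
    and "k < length vs" "cycle_edge vs k \<in> D"
  shows "cycle_edges vs \<subseteq> D"
proof -
  let ?n = "length vs"
  have reach: "cycle_edge vs ((k + m) mod ?n) \<in> D" for m
  proof (induction m)
    case 0
    then show ?case using assms by simp
  next
    case (Suc m)
    have "(k + Suc m) mod ?n = Suc ((k + m) mod ?n) mod ?n" by (simp add: mod_Suc_eq)
    moreover have "(k + m) mod ?n < ?n" using assms(2) by (rule mod_less_of_less)
    ultimately show ?case using assms(1) Suc by simp
  qed
  show ?thesis unfolding cycle_edges_eq_image
  proof (rule image_subsetI)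
    fix i assume "i \<in> {..<?n}"
    then have "(k + (?n - k + i)) mod ?n = i" using assms(2) by simp
    then show "cycle_edge vs i \<in> D" using reach by metis
  qed
qed

lemma odd_vertices_proper_subcycle:
  assumes "distinct vs" "length vs \<ge> 3" "set vs \<subseteq> V"
    and "D \<subseteq> cycle_edges vs" "D \<noteq> {}" "D \<noteq> cycle_edges vs"
  shows "odd_vertices V D \<noteq> {}"
proof -
  let ?n = "length vs"
  obtain k where k: "k < ?n" "cycle_edge vs k \<in> D"
    using assms(4,5) unfolding cycle_edges_eq_image by blast
  have "\<not> (\<forall>i<?n. cycle_edge vs i \<in> D \<longrightarrow> cycle_edge vs (Suc i mod ?n) \<in> D)"
  proof
    assume "\<forall>i<?n. cycle_edge vs i \<in> D \<longrightarrow> cycle_edge vs (Suc i mod ?n) \<in> D"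
    then have "cycle_edges vs \<subseteq> D" using k by (rule cycle_edge_closed_set)
    then show False using assms(4,6) by blast
  qed
  then obtain i where i: "i < ?n" "cycle_edge vs i \<in> D" "cycle_edge vs (Suc i mod ?n) \<notin> D"
    by blast
  \<comment> \<open>The vertex between edge i, in D, and the next edge, not in D, has degree 1 in D.\<close>
  define j where "j = Suc i mod ?n"
  have j: "j < ?n" using i(1) unfolding j_def by (rule mod_less_of_less)
  have "{e \<in> D. vs ! j \<in> e} = {e \<in> cycle_edges vs. vs ! j \<in> e} \<inter> D" using assms(4) by auto
  also have "\<dots> = {cycle_edge vs j, cycle_edge vs i} \<inter> D"
    using cycle_edges_at_nth[OF assms(1) j i(1)] j_def by simp
  also have "\<dots> = {cycle_edge vs i}" using i j_def by auto
  finally have "degree D (vs ! j) = 1" unfolding degree_def by simp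
  moreover have "vs ! j \<in> V" using j assms(3) by auto
  ultimately show ?thesis unfolding odd_vertices_def by auto
qed

subsection \<open>The binary matroid of cycles and T-joins\<close>

definition join_space :: "'v set \<Rightarrow> 'v set set \<Rightarrow> 'v set \<Rightarrow> 'v set set set" where
  "join_space V E T = {J. J \<subseteq> E \<and> (odd_vertices V J = {} \<or> odd_vertices V J = T)}"

definition join_circuits :: "'v set \<Rightarrow> 'v set set \<Rightarrow> 'v set \<Rightarrow> 'v set set set" where
  "join_circuits V E T = {D \<in> join_space V E T. D \<noteq> {} \<and>
     (\<forall>D' \<in> join_space V E T. D' \<subseteq> D \<longrightarrow> D' = {} \<or> D' = D)}"

lemma join_space_symdiff:
  assumes "finite E" "A \<in> join_space V E T" "B \<in> join_space V E T"
  shows "A \<triangle> B \<in> join_space V E T"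
proof -
  have "finite A" "finite B" using assms unfolding join_space_def by (auto intro: finite_subset)
  then have "odd_vertices V (A \<triangle> B) = odd_vertices V A \<triangle> odd_vertices V B"
    by (rule odd_vertices_symdiff)
  then show ?thesis using assms(2,3) unfolding join_space_def by auto
qed

lemma join_circuit_below:
  assumes "finite E" "X \<in> join_space V E T" "X \<noteq> {}"
  shows "\<exists>D \<in> join_circuits V E T. D \<subseteq> X"
  using assms(2,3)
proof (induction "card X" arbitrary: X rule: less_induct)
  case less
  show ?case
  proof (cases "X \<in> join_circuits V E T")
    case False
    then obtain D' where D': "D' \<in> join_space V E T" "D' \<subseteq> X" "D' \<noteq> {}" "D' \<noteq> X"
      using less.prems unfolding join_circuits_def by blast
    have "finite X" using less.prems assms(1) unfolding join_space_def by (auto intro: finite_subset)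
    then have "card D' < card X" using D' by (meson psubsetI psubset_card_mono)
    then show ?thesis using less.hyps[OF _ D'(1,3)] D'(2) by blast
  qed blast
qed

lemma join_space_disjoint_decomposition:
  assumes "finite E" "X \<in> join_space V E T"
  shows "\<exists>F. F \<subseteq> join_circuits V E T \<and> pairwise disjnt F \<and> \<Union>F = X"
  using assms(2)
proof (induction "card X" arbitrary: X rule: less_induct)
  case less
  show ?case
  proof (cases "X = {}")
    case True
    then show ?thesis by (intro exI[of _ "{}"]) auto
  next
    case False
    obtain D where D: "D \<in> join_circuits V E T" "D \<subseteq> X"
      using join_circuit_below[OF assms(1) less.prems False] by blast
    have D_join: "D \<in> join_space V E T" "D \<noteq> {}" using D(1) unfolding join_circuits_def by auto
    have "X \<triangle> D = X - D" using D(2) by auto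
    then have XD: "X - D \<in> join_space V E T"
      using join_space_symdiff[OF assms(1) less.prems D_join(1)] by simp
    have "finite X" using less.prems assms(1) unfolding join_space_def by (auto intro: finite_subset)
    then have "card (X - D) < card X" using D(2) D_join(2) by (intro psubset_card_mono) auto
    then obtain F where F: "F \<subseteq> join_circuits V E T" "pairwise disjnt F" "\<Union>F = X - D"
      using less.hyps[OF _ XD] by blast
    have "pairwise disjnt (insert D F)"
      using F(2,3) unfolding pairwise_def disjnt_def by blast
    moreover have "\<Union>(insert D F) = X" using F(3) D(2) by auto
    ultimately show ?thesis using F(1) D(1) by (intro exI[of _ "insert D F"]) auto
  qed
qed

lemma binary_matroid_join_circuits:
  assumes "finite E" "E \<noteq> {}"
  shows "binary_matroid E (join_circuits V E T)"
proof -
  let ?C = "join_circuits V E T"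
  have binary: "\<forall>A \<in> ?C. \<forall>B \<in> ?C. \<exists>F. F \<subseteq> ?C \<and> pairwise disjnt F \<and> \<Union>F = A \<triangle> B"
  proof (intro ballI)
    fix A B assume "A \<in> ?C" "B \<in> ?C"
    then have "A \<in> join_space V E T" "B \<in> join_space V E T" unfolding join_circuits_def by auto
    then have "A \<triangle> B \<in> join_space V E T" by (rule join_space_symdiff[OF assms(1)])
    then show "\<exists>F. F \<subseteq> ?C \<and> pairwise disjnt F \<and> \<Union>F = A \<triangle> B"
      by (rule join_space_disjoint_decomposition[OF assms(1)])
  qed
  have exchange: "\<forall>A \<in> ?C. \<forall>B \<in> ?C. \<forall>a \<in> A \<inter> B. \<forall>b \<in> (A \<union> B) - (A \<inter> B).
      \<exists>D \<in> ?C. D \<subseteq> A \<union> B \<and> a \<notin> D \<and> b \<in> D"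
  proof (intro ballI)
    fix A B a b assume A: "A \<in> ?C" and B: "B \<in> ?C" and a: "a \<in> A \<inter> B"
      and b: "b \<in> (A \<union> B) - (A \<inter> B)"
    obtain F where F: "F \<subseteq> ?C" "\<Union>F = A \<triangle> B"
      using bspec[OF bspec[OF binary A] B] by blast
    have "b \<in> \<Union>F" unfolding F(2) using b by blast
    then obtain D where "D \<in> F" "b \<in> D" by (rule UnionE)
    then show "\<exists>D \<in> ?C. D \<subseteq> A \<union> B \<and> a \<notin> D \<and> b \<in> D"
      using F a by (intro bexI[of _ D]) auto
  qed
  have "?C \<subseteq> Pow E" unfolding join_circuits_def join_space_def by blast
  moreover have "\<forall>A \<in> ?C. \<forall>B \<in> ?C. A \<subseteq> B \<longrightarrow> A = B" unfolding join_circuits_def by blast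
  ultimately show ?thesis
    unfolding binary_matroid_def matroid_def using assms(2) binary exchange by (simp only: simp_thms)
qed

lemma finite_edges_graph: "graph V E \<Longrightarrow> finite E"
  unfolding graph_def by (metis (no_types, lifting) PowI finite_Pow_iff finite_subset
      insert_subset subsetI empty_subsetI)

lemma graph_circuit_in_join_circuits:
  assumes "C \<in> graph_circuits V E"
    and "\<And>vs. is_cycle V E vs \<Longrightarrow> \<not> T \<subseteq> set vs"
  shows "C \<in> join_circuits V E T"
proof -
  obtain vs where vs: "C = cycle_edges vs" "is_cycle V E vs"
    using assms(1) unfolding graph_circuits_def by blast
  have cy: "length vs \<ge> 3" "distinct vs" "set vs \<subseteq> V" "cycle_edges vs \<subseteq> E"
    using vs(2) unfolding is_cycle_def by auto
  have C_join: "C \<in> join_space V E T"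
    using assms(1) odd_vertices_graph_circuit cy(4) vs(1) unfolding join_space_def by blast
  have "cycle_edge vs 0 \<in> C" using vs(1) cy(1) unfolding cycle_edges_eq_image by auto
  then have "C \<noteq> {}" by blast
  moreover have "\<forall>D' \<in> join_space V E T. D' \<subseteq> C \<longrightarrow> D' = {} \<or> D' = C"
  proof (intro ballI impI, rule ccontr)
    fix D' assume D': "D' \<in> join_space V E T" "D' \<subseteq> C" "\<not> (D' = {} \<or> D' = C)"
    then have "odd_vertices V D' \<noteq> {}"
      using odd_vertices_proper_subcycle[OF cy(2,1,3)] vs(1) by blast
    moreover have "odd_vertices V D' \<subseteq> set vs" using odd_vertices_subset_cycle D'(2) vs(1) by blast
    ultimately show False using D'(1) assms(2)[OF vs(2)] unfolding join_space_def by blast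
  qed
  ultimately show ?thesis using C_join unfolding join_circuits_def by simp
qed

lemma minimum_join_in_join_circuits:
  assumes "finite E" "D \<subseteq> E" "odd_vertices V D = T"
    and minimum: "\<forall>J. J \<subseteq> E \<and> odd_vertices V J = T \<longrightarrow> card D \<le> card J"
    and "T \<noteq> {}"
  shows "D \<in> join_circuits V E T"
proof -
  have fD: "finite D" using assms(1,2) by (rule finite_subset[rotated])
  have False if "D' \<in> join_space V E T" "D' \<subseteq> D" "D' \<noteq> {}" "D' \<noteq> D" for D'
  proof -
    have less: "card D' < card D" "card (D - D') < card D"
      using that(2,3,4) fD by (auto intro: psubset_card_mono)
    have "D' \<subseteq> E" "odd_vertices V D' = {} \<or> odd_vertices V D' = T"
      using that(1) unfolding join_space_def by auto
    then show False
    proof (elim conjE disjE)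
      assume "odd_vertices V D' = {}"
      moreover have "D \<triangle> D' = D - D'" using that(2) by auto
      ultimately have "odd_vertices V (D - D') = T"
        using odd_vertices_symdiff[OF fD finite_subset[OF that(2) fD]] assms(3) by simp
      then show False using minimum[rule_format, of "D - D'"] less(2) assms(2) by auto
    qed (use minimum[rule_format, of D'] less(1) in auto)
  qed
  moreover have "D \<noteq> {}" using assms(3,5) unfolding odd_vertices_def degree_def by auto
  ultimately show ?thesis using assms(2,3) unfolding join_circuits_def join_space_def by blast
qed

lemma nontrivial_binary_circuit_injection:
  assumes "graph V E" "E \<noteq> {}" "J \<subseteq> E" "odd_vertices V J \<noteq> {}"
    and "\<And>vs. is_cycle V E vs \<Longrightarrow> \<not> odd_vertices V J \<subseteq> set vs"
  shows "\<exists>(f :: 'v set \<Rightarrow> 'v set) S \<C>.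
           binary_matroid S \<C> \<and> nontrivial_circuit_injection f (cycle_matroid V E) (S, \<C>)"
proof -
  define T where "T = odd_vertices V J"
  have fE: "finite E" using assms(1) by (rule finite_edges_graph)
  have T_ne: "T \<noteq> {}" using assms(4) unfolding T_def .
  have "\<exists>D. (D \<subseteq> E \<and> odd_vertices V D = T) \<and>
      (\<forall>J'. J' \<subseteq> E \<and> odd_vertices V J' = T \<longrightarrow> card D \<le> card J')"
    by (rule ex_has_least_nat[where k = J]) (simp add: assms(3) T_def)
  then obtain D where D: "D \<subseteq> E" "odd_vertices V D = T"
    and minimum: "\<forall>J'. J' \<subseteq> E \<and> odd_vertices V J' = T \<longrightarrow> card D \<le> card J'"
    by (elim exE conjE)
  have "D \<in> join_circuits V E T" using minimum_join_in_join_circuits[OF fE D minimum T_ne] .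
  moreover have "D \<notin> graph_circuits V E"
  proof
    assume "D \<in> graph_circuits V E"
    then have "odd_vertices V D = {}" by (rule odd_vertices_graph_circuit)
    then show False using D(2) T_ne by simp
  qed
  moreover have "C \<in> join_circuits V E T" if "C \<in> graph_circuits V E" for C
    using graph_circuit_in_join_circuits[OF that] assms(5) unfolding T_def by blast
  ultimately have "nontrivial_circuit_injection (\<lambda>x. x) (cycle_matroid V E) (E, join_circuits V E T)"
    unfolding nontrivial_circuit_injection_def circuit_injection_def cycle_matroid_def
    by (auto simp: bij_betw_def)
  then show ?thesis using binary_matroid_join_circuits[OF fE assms(2)] by blast
qed

subsection \<open>Parity-connected vertices\<close>

text \<open>For distinct vertices, being linked means lying in the same component.\<close>

definition linked :: "'v set \<Rightarrow> 'v set set \<Rightarrow> 'v \<Rightarrow> 'v \<Rightarrow> bool" where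
  "linked V E a b \<longleftrightarrow> a = b \<or> (\<exists>J \<subseteq> E. odd_vertices V J = {a, b})"

lemma linked_edge:
  assumes "graph V E" "{x, y} \<in> E"
  shows "linked V E x y"
proof -
  have "{{x, y}} \<subseteq> E" using assms(2) by simp
  then show ?thesis unfolding linked_def using odd_vertices_edge[OF assms] by blast
qed

lemma linked_sym: "linked V E a b \<Longrightarrow> linked V E b a"
  unfolding linked_def by (auto simp: insert_commute)

lemma linked_trans:
  assumes "finite E" "linked V E a b" "linked V E b c"
  shows "linked V E a c"
proof (cases "a = b \<or> b = c \<or> a = c")
  case False
  then obtain J1 J2 where J: "J1 \<subseteq> E" "odd_vertices V J1 = {a, b}"
    "J2 \<subseteq> E" "odd_vertices V J2 = {b, c}"
    using assms unfolding linked_def by blast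
  have "finite J1" "finite J2" using J(1,3) assms(1) by (auto intro: finite_subset)
  then have "odd_vertices V (J1 \<triangle> J2) = {a, c}"
    using odd_vertices_symdiff[of J1 J2] J(2,4) False by auto
  moreover have "J1 \<triangle> J2 \<subseteq> E" using J by auto
  ultimately show ?thesis unfolding linked_def by blast
qed (use assms in \<open>auto simp: linked_def\<close>)

lemma linked_on_cycle:
  assumes "graph V E" "is_cycle V E vs" "a \<in> set vs" "b \<in> set vs"
  shows "linked V E a b"
proof -
  have fE: "finite E" using assms(1) by (rule finite_edges_graph)
  have from_first: "linked V E (vs ! 0) (vs ! i)" if "i < length vs" for i
    using that
  proof (induction i)
    case 0
    then show ?case unfolding linked_def by simp
  next
    case (Suc i)
    have "cycle_edge vs i \<in> E"
      using assms(2) Suc.prems unfolding is_cycle_def cycle_edges_eq_image by auto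
    then have "{vs ! i, vs ! Suc i} \<in> E" using Suc.prems unfolding cycle_edge_def by simp
    then show ?case using Suc linked_edge[OF assms(1)] linked_trans[OF fE] by (metis Suc_lessD)
  qed
  show ?thesis
    using assms(3,4) from_first linked_sym linked_trans[OF fE] by (metis in_set_conv_nth)
qed

lemma even_set_is_odd_vertices:
  assumes "finite E" "finite V" "\<forall>a \<in> V. \<forall>b \<in> V. linked V E a b"
  shows "T \<subseteq> V \<Longrightarrow> even (card T) \<Longrightarrow> \<exists>J \<subseteq> E. odd_vertices V J = T"
proof (induction "card T" arbitrary: T rule: less_induct)
  case less
  show ?case
  proof (cases "T = {}")
    case True
    then show ?thesis unfolding odd_vertices_def degree_def by (intro exI[of _ "{}"]) auto
  next
    case False
    have fT: "finite T" using less.prems assms(2) by (auto intro: finite_subset)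
    obtain a b where ab: "a \<in> T" "b \<in> T" "a \<noteq> b"
      using False less.prems(2) fT by (metis card_1_singletonE odd_one is_singletonI'
          is_singleton_altdef)
    define T' where "T' = T - {a, b}"
    have ab_T: "{a, b} \<subseteq> T" using ab by simp
    have "card T' = card T - 2" using card_Diff_subset[OF _ ab_T] ab(3) unfolding T'_def by simp
    moreover have "2 \<le> card T" using card_mono[OF fT ab_T] ab(3) by simp
    moreover have "T' \<subseteq> V" using less.prems(1) unfolding T'_def by blast
    ultimately obtain J' where J': "J' \<subseteq> E" "odd_vertices V J' = T'"
      using less.hyps[of T'] less.prems(2) by fastforce
    have "linked V E a b" using assms(3) ab less.prems(1) by blast
    then obtain J2 where J2: "J2 \<subseteq> E" "odd_vertices V J2 = {a, b}"
      using ab(3) unfolding linked_def by auto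
    have "finite J'" "finite J2" using J'(1) J2(1) assms(1) by (auto intro: finite_subset)
    then have "odd_vertices V (J' \<triangle> J2) = T"
      using odd_vertices_symdiff[of J' J2] J'(2) J2(2) ab unfolding T'_def by auto
    moreover have "J' \<triangle> J2 \<subseteq> E" using J' J2 by auto
    ultimately show ?thesis by blast
  qed
qed

lemma edge_at_vertex:
  assumes "graph V E" "no_isolated_vertices V E" "x \<in> V"
  obtains y where "{x, y} \<in> E"
proof -
  obtain e where "e \<in> E" "x \<in> e" using assms(2,3) unfolding no_isolated_vertices_def by blast
  moreover then obtain u v where "e = {u, v}" using assms(1) unfolding graph_def by blast
  ultimately show ?thesis using that by (metis insert_commute insertE singletonD)
qed

lemma cycle_through_even_vertex_set:
  assumes "graph V E" "no_isolated_vertices V E"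
    and no_extension: "\<not> (\<exists>(f :: 'v set \<Rightarrow> 'v set) S \<C>.
           binary_matroid S \<C> \<and> nontrivial_circuit_injection f (cycle_matroid V E) (S, \<C>))"
    and "T \<subseteq> V" "T \<noteq> {}" "even (card T)"
  shows "\<exists>C \<in> graph_circuits V E. T \<subseteq> circuit_vertices C"
proof (rule ccontr)
  assume "\<not> ?thesis"
  moreover have "set vs \<subseteq> circuit_vertices (cycle_edges vs)" for vs :: "'v list"
    unfolding circuit_vertices_def cycle_edges_eq_image cycle_edge_def
    by (auto simp: in_set_conv_nth)
  ultimately have no_cycle: "\<not> T \<subseteq> set vs" if "is_cycle V E vs" for vs
    using that unfolding graph_circuits_def by blast
  have fE: "finite E" using assms(1) by (rule finite_edges_graph)
  have "E \<noteq> {}" using assms(2,4,5) unfolding no_isolated_vertices_def by blast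
  note extension = nontrivial_binary_circuit_injection[OF assms(1) this]
  show False
  proof (cases "\<forall>a \<in> V. \<forall>b \<in> V. linked V E a b")
    case True
    have "finite V" using assms(1) unfolding graph_def by simp
    then obtain J where J: "J \<subseteq> E" "odd_vertices V J = T"
      using even_set_is_odd_vertices[OF fE _ True assms(4,6)] by blast
    show False using extension[OF J(1)] no_cycle assms(5) no_extension unfolding J(2) by blast
  next
    case False
    then obtain a b where ab: "a \<in> V" "b \<in> V" "\<not> linked V E a b" by blast
    obtain a' b' where e: "{a, a'} \<in> E" "{b, b'} \<in> E"
      using edge_at_vertex[OF assms(1,2)] ab(1,2) by metis
    have "\<not> linked V E a b'"
      using ab(3) linked_trans[OF fE _ linked_sym[OF linked_edge[OF assms(1) e(2)]]] by blast
    moreover have "\<not> linked V E a' b"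
      using ab(3) linked_trans[OF fE linked_edge[OF assms(1) e(1)]] by blast
    ultimately have distinct: "a \<noteq> b" "a \<noteq> b'" "a' \<noteq> b"
      using ab(3) unfolding linked_def by auto
    define J where "J = {{a, a'}} \<triangle> {{b, b'}}"
    have "odd_vertices V J = {a, a'} \<triangle> {b, b'}"
      using odd_vertices_symdiff[of "{{a, a'}}" "{{b, b'}}" V]
        odd_vertices_edge[OF assms(1) e(1)] odd_vertices_edge[OF assms(1) e(2)]
      unfolding J_def by simp
    then have ab_odd: "a \<in> odd_vertices V J" "b \<in> odd_vertices V J" using distinct by auto
    have "J \<subseteq> E" using e unfolding J_def by auto
    moreover have "\<not> odd_vertices V J \<subseteq> set vs" if "is_cycle V E vs" for vs
      using ab_odd ab(3) linked_on_cycle[OF assms(1) that] by blast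
    ultimately show False using extension ab_odd no_extension by blast
  qed
qed

theorem lemma2p2:
  fixes V :: "'v set" and E :: "'v set set" and N :: nat
  assumes "graph V E"
    and "V \<noteq> {}"
    and "no_isolated_vertices V E"
    and "\<not> (\<exists>(f :: 'v set \<Rightarrow> 'v set) S \<C>.
              binary_matroid S \<C> \<and> nontrivial_circuit_injection f (cycle_matroid V E) (S, \<C>))"
  shows "(card V = 2 * N \<longrightarrow> hamiltonian V E)
       \<and> (card V = 2 * N + 1 \<longrightarrow> almost_hamiltonian V E)"
proof (intro conjI impI)
  note cover = cycle_through_even_vertex_set[OF assms(1,3,4)]
  show "hamiltonian V E" if "card V = 2 * N"
    using cover[OF order_refl assms(2)] that unfolding hamiltonian_def by simp
  assume odd_card: "card V = 2 * N + 1"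
  have "N \<noteq> 0"
  proof
    assume "N = 0"
    then obtain v where "V = {v}" using odd_card card_1_singletonE by auto
    then show False
      using assms(1,3) unfolding no_isolated_vertices_def graph_def by blast
  qed
  show "almost_hamiltonian V E"
    unfolding almost_hamiltonian_def
  proof (intro allI impI)
    fix W assume W: "W \<subseteq> V \<and> card W = card V - 1"
    then have "card W = 2 * N" using odd_card by simp
    moreover from this have "W \<noteq> {}" using \<open>N \<noteq> 0\<close> by auto
    ultimately show "\<exists>C \<in> graph_circuits V E. W \<subseteq> circuit_vertices C"
      using cover[of W] W by simp
  qed
qed

end
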